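(* Let $0\le k\le n$ be fixed. Let $\mathcal{G}=\{U^g\mid g\in G=\mathbb{Z}_2^{\times(n-k)}\}$, where $U^e=I^{\otimes n}$, be a Pauli stabilizer group on $\mathcal{H}\simeq(\mathbb{C}^2)^{\otimes n}$, i.e. $-I\notin\mathcal{G}$ and for all $g,h\in G$: $U^g\in\mathcal{P}_n$, $[U^g,U^h]=0$, $U^gU^h=U^{gh}\in\mathcal{G}$, and $U^g=U^h$ iff $g=h$. Then there exists $A\subseteq\{1,\ldots,n\}$ with exactly $k$ elements such that $\pi_A(U^g)=I^{\otimes n}$ if and only if $g=e$, where $\pi_A=\prod_{a\in A}\pi_a$.
   Context: $\mathcal{P}_n$ is the $n$-qubit Pauli group (operators $i^\lambda\mathcal{O}_1\cdots\mathcal{O}_n$, $\lambda\in\{0,1,2,3\}$, $\mathcal{O}_j\in\{I,X,Y,Z\}$ acting on qubit $j$). For $a\in\{1,\ldots,n\}$, $\pi_a:\mathcal{P}_n\to\mathcal{P}_n$ maps $i^\lambda\mathcal{O}_1\cdots\mathcal{O}_{a-1}\mathcal{O}_a\mathcal{O}_{a+1}\cdots\mathcal{O}_n$ to $\mathcal{O}_1\cdots\mathcal{O}_{a-1}I\mathcal{O}_{a+1}\cdots\mathcal{O}_n$, i.e. it replaces the $a$-th letter by the identity and removes any prefactor other than $1$. *)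

theory Defs
  imports Main
begin

datatype pauli = PI | PX | PY | PZ

text \<open>Product of two letters: returns (lambda, O) meaning i^lambda O.\<close>
fun pmul :: "pauli \<Rightarrow> pauli \<Rightarrow> nat \<times> pauli" where
  "pmul PI p = (0, p)"
| "pmul PX PI = (0, PX)" | "pmul PY PI = (0, PY)" | "pmul PZ PI = (0, PZ)"
| "pmul PX PX = (0, PI)" | "pmul PY PY = (0, PI)" | "pmul PZ PZ = (0, PI)"
| "pmul PX PY = (1, PZ)" | "pmul PY PX = (3, PZ)"
| "pmul PY PZ = (1, PX)" | "pmul PZ PY = (3, PX)"
| "pmul PZ PX = (1, PY)" | "pmul PX PZ = (3, PY)"

text \<open>An n-qubit Pauli operator i^lambda O_1 ... O_n is encoded as (lambda, [O_1,...,O_n]),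
  with lambda in {0,1,2,3}; this encoding is faithful (the operators are distinct).\<close>
type_synonym pop = "nat \<times> pauli list"

definition pauli_group :: "nat \<Rightarrow> pop set" where
  "pauli_group n = {(l, w). l < 4 \<and> length w = n}"

definition pop_mult :: "pop \<Rightarrow> pop \<Rightarrow> pop" where
  "pop_mult U V =
     (let ps = map2 pmul (snd U) (snd V)
      in ((fst U + fst V + sum_list (map fst ps)) mod 4, map snd ps))"

definition pop_id :: "nat \<Rightarrow> pop" where
  "pop_id n = (0, replicate n PI)"

definition pop_minus_id :: "nat \<Rightarrow> pop" where
  "pop_minus_id n = (2, replicate n PI)"

definition pi_proj :: "nat \<Rightarrow> pop \<Rightarrow> pop" where
  "pi_proj a U = (0, (snd U)[a - 1 := PI])"

definition pi_set :: "nat set \<Rightarrow> pop \<Rightarrow> pop" where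
  "pi_set A = Finite_Set.fold (\<lambda>a f. pi_proj a \<circ> f) id A"

definition Z2vec :: "nat \<Rightarrow> bool list set" where
  "Z2vec m = {g. length g = m}"

definition z2_mult :: "bool list \<Rightarrow> bool list \<Rightarrow> bool list" where
  "z2_mult g h = map2 (\<noteq>) g h"

definition z2_unit :: "nat \<Rightarrow> bool list" where
  "z2_unit m = replicate m False"

end

theory Submission
  imports Defs
begin

text \<open>An element of \<open>\<G>\<close> all of whose letters are \<open>I\<close> squares to \<open>I\<close>, so it is \<open>\<plusminus>I\<close>,
  hence \<open>I\<close> because \<open>-I \<notin> \<G>\<close>. It therefore suffices to find \<open>A\<close> with \<open>|A| = k\<close> such that
  no nontrivial letter word of \<open>\<G>\<close> is supported inside \<open>A\<close>. Such an \<open>A\<close> is built greedily from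
  the empty set: if \<open>|A| < k\<close> and no qubit \<open>j \<notin> A\<close> could be added, every such \<open>j\<close> would
  carry an element of \<open>\<G>\<close> whose support outside \<open>A\<close> is exactly \<open>{j}\<close>, and products of
  these would realise all \<open>2\<^bsup>n-|A|\<^esup> > 2\<^bsup>n-k\<^esup> = |\<G>|\<close> support patterns outside \<open>A\<close>.\<close>

lemma comp_fun_commute_pi_proj: "comp_fun_commute (\<lambda>a f. pi_proj a \<circ> f)"
proof
  fix a b :: nat
  show "(\<lambda>f. pi_proj a \<circ> f) \<circ> (\<lambda>f. pi_proj b \<circ> f) = (\<lambda>f. pi_proj b \<circ> f) \<circ> (\<lambda>f. pi_proj a \<circ> f)"
    by (cases "a - 1 = b - 1") (auto simp: fun_eq_iff pi_proj_def list_update_swap)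
qed

lemma pi_set_empty [simp]: "pi_set {} = id"
  by (simp add: pi_set_def)

lemma pi_set_insert:
  assumes "finite A" "a \<notin> A"
  shows "pi_set (insert a A) = pi_proj a \<circ> pi_set A"
proof -
  interpret comp_fun_commute "\<lambda>a f. pi_proj a \<circ> f"
    by (rule comp_fun_commute_pi_proj)
  show ?thesis
    unfolding pi_set_def using assms by simp
qed

lemma length_pi_set [simp]: "finite A \<Longrightarrow> length (snd (pi_set A U)) = length (snd U)"
  by (induction A rule: finite_induct) (simp_all add: pi_set_insert pi_proj_def)

lemma nth_pi_set:
  assumes "finite A" "0 \<notin> A" "i < length (snd U)"
  shows "snd (pi_set A U) ! i = (if Suc i \<in> A then PI else snd U ! i)"
  using assms
proof (induction A rule: finite_induct)
  case (insert a A)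
  then obtain b where "a = Suc b"
    by (cases a) auto
  with insert show ?case
    by (cases "i = b") (simp_all add: pi_set_insert pi_proj_def)
qed simp

definition word_supp :: "pauli list \<Rightarrow> nat set" where
  "word_supp w = {Suc i | i. i < length w \<and> w ! i \<noteq> PI}"

lemma word_supp_subset_iff:
  "word_supp w \<subseteq> A \<longleftrightarrow> (\<forall>i < length w. Suc i \<notin> A \<longrightarrow> w ! i = PI)"
  unfolding word_supp_def by blast

lemma word_supp_empty_iff: "word_supp w = {} \<longleftrightarrow> w = replicate (length w) PI"
  using word_supp_subset_iff[of w "{}"] by (auto simp: list_eq_iff_nth_eq)

lemma word_supp_subset_if_pi_set_eq_pop_id:
  assumes "finite A" "0 \<notin> A" "pi_set A U = pop_id n"
  shows "word_supp (snd U) \<subseteq> A"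
proof -
  have "snd (pi_set A U) = replicate n PI"
    using assms(3) by (simp add: pop_id_def)
  moreover have "length (snd U) = n"
    using arg_cong[OF calculation, of length] assms(1) by simp
  ultimately have "snd U ! i = PI" if "i < length (snd U)" "Suc i \<notin> A" for i
    using nth_pi_set[OF assms(1,2) that(1)] that by simp
  then show ?thesis
    by (simp add: word_supp_subset_iff)
qed

lemma replicate_update_same: "(replicate n x)[i := x] = replicate n x"
  by (cases "i < n") (simp_all add: list_update_same_conv list_update_beyond)

lemma pi_set_pop_id: "finite A \<Longrightarrow> pi_set A (pop_id n) = pop_id n"
  by (induction A rule: finite_induct)
    (simp_all add: pi_set_insert pi_proj_def pop_id_def replicate_update_same)

definition word_mult :: "pauli list \<Rightarrow> pauli list \<Rightarrow> pauli list" where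
  "word_mult v w = map2 (\<lambda>x y. snd (pmul x y)) v w"

lemma snd_pop_mult: "snd (pop_mult U V) = word_mult (snd U) (snd V)"
  by (simp add: pop_mult_def word_mult_def Let_def case_prod_unfold)

lemma snd_pmul_PI [simp]: "snd (pmul x PI) = x" "snd (pmul PI x) = x"
  by (cases x; simp)+

lemma mem_word_supp_word_mult:
  assumes "length v = length w"
  shows "i \<notin> word_supp w \<Longrightarrow> i \<in> word_supp (word_mult v w) \<longleftrightarrow> i \<in> word_supp v"
    and "i \<notin> word_supp v \<Longrightarrow> i \<in> word_supp (word_mult v w) \<longleftrightarrow> i \<in> word_supp w"
  using assms by (auto simp: word_supp_def word_mult_def)

definition no_nontrivial_word_supported_in :: "pauli list set \<Rightarrow> nat set \<Rightarrow> bool" where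
  "no_nontrivial_word_supported_in W A \<longleftrightarrow>
     (\<forall>w \<in> W. word_supp w \<subseteq> A \<longrightarrow> w = replicate (length w) PI)"

context
  fixes W :: "pauli list set" and n :: nat
  assumes length_W: "\<And>w. w \<in> W \<Longrightarrow> length w = n"
    and one_W: "replicate n PI \<in> W"
    and word_mult_W: "\<And>v w. v \<in> W \<Longrightarrow> w \<in> W \<Longrightarrow> word_mult v w \<in> W"
begin

lemma word_supp_patterns:
  assumes "finite T" "T \<subseteq> B"
    and "\<And>j. j \<in> B \<Longrightarrow> u j \<in> W \<and> word_supp (u j) \<inter> B = {j}"
  shows "\<exists>w \<in> W. word_supp w \<inter> B = T"
  using assms
proof (induction T rule: finite_induct)
  case empty
  show ?case
    using one_W word_supp_empty_iff[of "replicate n PI"] by auto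
next
  case (insert t T)
  then obtain w where w: "w \<in> W" "word_supp w \<inter> B = T"
    by auto
  have u: "u t \<in> W" "word_supp (u t) \<inter> B = {t}"
    using insert.prems by auto
  have len: "length w = length (u t)"
    using w(1) u(1) length_W by simp
  have "i \<in> word_supp (word_mult w (u t)) \<longleftrightarrow> i \<in> insert t T" if "i \<in> B" for i
  proof (cases "i = t")
    case True
    then have "i \<notin> word_supp w"
      using w(2) insert.hyps(2) that by blast
    then show ?thesis
      using mem_word_supp_word_mult(2)[OF len] u(2) True by blast
  next
    case False
    then have "i \<notin> word_supp (u t)"
      using u(2) that by blast
    then show ?thesis
      using mem_word_supp_word_mult(1)[OF len] w(2) False that by blast
  qed
  then have "word_supp (word_mult w (u t)) \<inter> B = insert t T"
    using insert.prems(1) by blast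
  with w u word_mult_W show ?case
    by blast
qed

lemma no_nontrivial_word_supported_in_insert:
  assumes "finite W" "A \<subseteq> {1..n}" "no_nontrivial_word_supported_in W A"
    and "card W < 2 ^ (n - card A)"
  shows "\<exists>j \<in> {1..n} - A. no_nontrivial_word_supported_in W (insert j A)"
proof (rule ccontr)
  define B where "B = {1..n} - A"
  assume "\<not> ?thesis"
  then have "\<exists>w \<in> W. word_supp w \<subseteq> insert j A \<and> w \<noteq> replicate n PI" if "j \<in> B" for j
    using that length_W unfolding B_def no_nontrivial_word_supported_in_def by blast
  then obtain u where u: "\<And>j. j \<in> B \<Longrightarrow>
      u j \<in> W \<and> word_supp (u j) \<subseteq> insert j A \<and> u j \<noteq> replicate n PI"
    by metis
  have u_supp: "word_supp (u j) \<inter> B = {j}" if "j \<in> B" for j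
  proof -
    have "\<not> word_supp (u j) \<subseteq> A"
      using assms(3) u[OF that] length_W unfolding no_nontrivial_word_supported_in_def by metis
    then show ?thesis
      using u[OF that] that unfolding B_def by blast
  qed
  have "Pow B \<subseteq> (\<lambda>w. word_supp w \<inter> B) ` W"
  proof
    fix T assume "T \<in> Pow B"
    then have "finite T" "T \<subseteq> B"
      unfolding B_def by (auto intro: finite_subset)
    then obtain w where "w \<in> W" "word_supp w \<inter> B = T"
      using word_supp_patterns u u_supp by metis
    then show "T \<in> (\<lambda>w. word_supp w \<inter> B) ` W"
      by blast
  qed
  then have "card (Pow B) \<le> card W"
    using assms(1) card_image_le card_mono finite_imageI le_trans by metis
  moreover have "card B = n - card A"
    using assms(2) unfolding B_def by (simp add: card_Diff_subset finite_subset)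
  ultimately show False
    using assms(4) by (simp add: card_Pow B_def)
qed

lemma exists_no_nontrivial_word_supported_in:
  assumes "finite W" "k \<le> n" "card W \<le> 2 ^ (n - k)"
  shows "\<exists>A \<subseteq> {1..n}. card A = k \<and> no_nontrivial_word_supported_in W A"
proof -
  have "\<exists>A \<subseteq> {1..n}. card A = r \<and> no_nontrivial_word_supported_in W A" if "r \<le> k" for r
    using that
  proof (induction r)
    case 0
    have "no_nontrivial_word_supported_in W {}"
      by (simp add: no_nontrivial_word_supported_in_def word_supp_empty_iff)
    then show ?case
      by (intro exI[of _ "{}"]) simp
  next
    case (Suc r)
    then obtain A where A: "A \<subseteq> {1..n}" "card A = r" "no_nontrivial_word_supported_in W A"
      by (meson Suc_leD)
    have "n - k < n - card A"
      using assms(2) Suc.prems A(2) by simp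
    then have "(2::nat) ^ (n - k) < 2 ^ (n - card A)"
      by (rule power_strict_increasing) simp
    with assms(3) have "card W < 2 ^ (n - card A)"
      by linarith
    then obtain j where "j \<in> {1..n} - A" "no_nontrivial_word_supported_in W (insert j A)"
      using no_nontrivial_word_supported_in_insert[OF assms(1) A(1,3)] by blast
    moreover have "finite A"
      using A(1) finite_subset by blast
    ultimately show ?case
      using A by (intro exI[of _ "insert j A"]) auto
  qed
  with assms(2) show ?thesis
    by blast
qed

end

lemma finite_Z2vec: "finite (Z2vec m)"
  using finite_lists_length_eq[of "UNIV :: bool set" m] by (simp add: Z2vec_def)

lemma card_Z2vec: "card (Z2vec m) = 2 ^ m"
  using card_lists_length_eq[of "UNIV :: bool set" m] by (simp add: Z2vec_def)

lemma z2_mult_Z2vec: "g \<in> Z2vec m \<Longrightarrow> h \<in> Z2vec m \<Longrightarrow> z2_mult g h \<in> Z2vec m"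
  by (simp add: Z2vec_def z2_mult_def)

lemma z2_unit_Z2vec: "z2_unit m \<in> Z2vec m"
  by (simp add: Z2vec_def z2_unit_def)

lemma z2_mult_self: "g \<in> Z2vec m \<Longrightarrow> z2_mult g g = z2_unit m"
  by (simp add: Z2vec_def z2_mult_def z2_unit_def zip_same_conv_map o_def map_replicate_const)

lemma pop_square_eq_pop_id_cases:
  assumes "U \<in> pauli_group n" "snd U = replicate n PI" "pop_mult U U = pop_id n"
  shows "U = pop_id n \<or> U = pop_minus_id n"
proof -
  obtain l where U: "U = (l, replicate n PI)" "l < 4"
    using assms(1,2) by (cases U) (auto simp: pauli_group_def)
  then have "(l + l) mod 4 = 0"
    using assms(3) by (simp add: pop_mult_def pop_id_def zip_same_conv_map sum_list_replicate)
  then have "l = 0 \<or> l = 2"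
    using U(2) by presburger
  with U show ?thesis
    by (auto simp: pop_id_def pop_minus_id_def)
qed

lemma stabilizer_trivial_letters_imp_unit:
  assumes "g \<in> Z2vec m" "U g \<in> pauli_group n" "snd (U g) = replicate n PI"
    and "pop_mult (U g) (U g) = U (z2_mult g g)" "U (z2_unit m) = pop_id n"
    and "pop_minus_id n \<notin> U ` Z2vec m" "inj_on U (Z2vec m)"
  shows "g = z2_unit m"
proof -
  have "pop_mult (U g) (U g) = pop_id n"
    using assms(1,4,5) by (simp add: z2_mult_self)
  moreover have "U g \<noteq> pop_minus_id n"
    using assms(1,6) by (metis image_eqI)
  ultimately have "U g = U (z2_unit m)"
    using pop_square_eq_pop_id_cases[OF assms(2,3)] assms(5) by auto
  with assms(1,7) show ?thesis
    by (auto simp: z2_unit_Z2vec dest: inj_onD)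
qed

theorem mainTheorem13:
  fixes n k :: nat and U :: "bool list \<Rightarrow> pop"
  assumes "k \<le> n"
    and "U (z2_unit (n - k)) = pop_id n"
    and "pop_minus_id n \<notin> U ` Z2vec (n - k)"
    and "\<forall>g \<in> Z2vec (n - k). U g \<in> pauli_group n"
    and "\<forall>g \<in> Z2vec (n - k). \<forall>h \<in> Z2vec (n - k). pop_mult (U g) (U h) = pop_mult (U h) (U g)"
    and "\<forall>g \<in> Z2vec (n - k). \<forall>h \<in> Z2vec (n - k). pop_mult (U g) (U h) = U (z2_mult g h)"
    and "\<forall>g \<in> Z2vec (n - k). \<forall>h \<in> Z2vec (n - k). U g = U h \<longleftrightarrow> g = h"
  shows "\<exists>A \<subseteq> {1..n}. card A = k \<and>
           (\<forall>g \<in> Z2vec (n - k). pi_set A (U g) = pop_id n \<longleftrightarrow> g = z2_unit (n - k))"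
proof -
  define W where "W = (\<lambda>g. snd (U g)) ` Z2vec (n - k)"
  have length_W: "\<And>w. w \<in> W \<Longrightarrow> length w = n"
    using assms(4) by (auto simp: W_def pauli_group_def)
  have one_W: "replicate n PI \<in> W"
    using assms(2) z2_unit_Z2vec unfolding W_def pop_id_def by (metis image_eqI snd_conv)
  have word_mult_W: "\<And>v w. v \<in> W \<Longrightarrow> w \<in> W \<Longrightarrow> word_mult v w \<in> W"
    using assms(6) by (auto simp: W_def simp flip: snd_pop_mult intro: z2_mult_Z2vec)
  have "card W \<le> 2 ^ (n - k)"
    unfolding W_def using card_image_le[OF finite_Z2vec] by (metis card_Z2vec)
  then obtain A where A: "A \<subseteq> {1..n}" "card A = k" "no_nontrivial_word_supported_in W A"
    using exists_no_nontrivial_word_supported_in[OF length_W one_W word_mult_W] assms(1)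
    by (metis W_def finite_Z2vec finite_imageI)
  have "finite A" "0 \<notin> A"
    using A(1) by (auto intro: finite_subset)
  show ?thesis
  proof (intro exI[of _ A] conjI ballI A iffI)
    fix g assume g: "g \<in> Z2vec (n - k)"
    show "pi_set A (U g) = pop_id n" if "g = z2_unit (n - k)"
      using that assms(2) pi_set_pop_id[OF \<open>finite A\<close>] by simp
    assume "pi_set A (U g) = pop_id n"
    then have "word_supp (snd (U g)) \<subseteq> A"
      using word_supp_subset_if_pi_set_eq_pop_id[OF \<open>finite A\<close> \<open>0 \<notin> A\<close>] by blast
    moreover have "snd (U g) \<in> W"
      using g by (simp add: W_def)
    ultimately have "snd (U g) = replicate n PI"
      using A(3) length_W unfolding no_nontrivial_word_supported_in_def by metis
    then show "g = z2_unit (n - k)"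
      using stabilizer_trivial_letters_imp_unit[of g "n - k" U n] g assms(2-4,6,7)
      by (simp add: inj_on_def)
  qed
qed

end
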